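(* Let $M$ be a right $R$-module such that for every cyclic submodule $X$ of $M$ there is a decomposition $M=D\oplus D'$ in which $D'$ is a supplement of $X$ in $M$ and $D$ is $D'$-projective. Then $M$ is principally Goldie*-lifting.
   Context: $R$ is an associative ring with identity; modules are unital right $R$-modules. $K\ll N$ means $K$ is small in $N$. A submodule $S$ is a supplement of $X$ in $M$ if $X+S=M$ and $X\cap S\ll S$. A module $A$ is $B$-projective if every homomorphism $A\to B/C$ ($C\le B$) lifts to a homomorphism $A\to B$. For submodules $X,Y$ of $M$, $X\,\beta^*\,Y$ means $(X+Y)/X\ll M/X$ and $(X+Y)/Y\ll M/Y$. $M$ is principally Goldie*-lifting if for every cyclic submodule $X$ of $M$ there is a direct summand $D$ of $M$ with $X\,\beta^*\,D$. *)

theory Defs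
  imports "HOL-Algebra.Ring"
begin

text \<open>The additive group of the module is an HOL-Algebra
 abelian group; the right scalar action is the extra field rsmult
 (rsmult M x r stands for x r).\<close>

record ('r, 'm) rmod = "'m ring" + rsmult :: "'m \<Rightarrow> 'r \<Rightarrow> 'm"

definition rmodule :: "'r ring \<Rightarrow> ('r, 'm) rmod \<Rightarrow> bool" where
  "rmodule R M \<longleftrightarrow> ring R \<and> abelian_group M \<and>
     (\<forall>x\<in>carrier M. \<forall>r\<in>carrier R. rsmult M x r \<in> carrier M) \<and>
     (\<forall>x\<in>carrier M. \<forall>y\<in>carrier M. \<forall>r\<in>carrier R.
        rsmult M (x \<oplus>\<^bsub>M\<^esub> y) r = rsmult M x r \<oplus>\<^bsub>M\<^esub> rsmult M y r) \<and>
     (\<forall>x\<in>carrier M. \<forall>r\<in>carrier R. \<forall>s\<in>carrier R.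
        rsmult M x (r \<oplus>\<^bsub>R\<^esub> s) = rsmult M x r \<oplus>\<^bsub>M\<^esub> rsmult M x s) \<and>
     (\<forall>x\<in>carrier M. \<forall>r\<in>carrier R. \<forall>s\<in>carrier R.
        rsmult M (rsmult M x r) s = rsmult M x (r \<otimes>\<^bsub>R\<^esub> s)) \<and>
     (\<forall>x\<in>carrier M. rsmult M x \<one>\<^bsub>R\<^esub> = x)"

definition rsubmodule :: "'r ring \<Rightarrow> ('r, 'm) rmod \<Rightarrow> 'm set \<Rightarrow> bool" where
  "rsubmodule R M N \<longleftrightarrow> N \<subseteq> carrier M \<and> \<zero>\<^bsub>M\<^esub> \<in> N \<and>
     (\<forall>x\<in>N. \<forall>y\<in>N. x \<oplus>\<^bsub>M\<^esub> y \<in> N) \<and>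
     (\<forall>x\<in>N. \<ominus>\<^bsub>M\<^esub> x \<in> N) \<and>
     (\<forall>x\<in>N. \<forall>r\<in>carrier R. rsmult M x r \<in> N)"

definition submod :: "('r, 'm) rmod \<Rightarrow> 'm set \<Rightarrow> ('r, 'm) rmod" where
  "submod M N = M\<lparr>carrier := N\<rparr>"

definition msum :: "('r, 'm) rmod \<Rightarrow> 'm set \<Rightarrow> 'm set \<Rightarrow> 'm set" where
  "msum M X Y = {x \<oplus>\<^bsub>M\<^esub> y | x y. x \<in> X \<and> y \<in> Y}"

definition mcoset :: "('r, 'm) rmod \<Rightarrow> 'm set \<Rightarrow> 'm \<Rightarrow> 'm set" where
  "mcoset M C x = {x \<oplus>\<^bsub>M\<^esub> c | c. c \<in> C}"

definition quot :: "('r, 'm) rmod \<Rightarrow> 'm set \<Rightarrow> ('r, 'm set) rmod" where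
  "quot M C = \<lparr>carrier = mcoset M C ` carrier M,
               mult = (\<lambda>_ _. undefined), one = undefined,
               zero = C,
               add = (\<lambda>A B. {a \<oplus>\<^bsub>M\<^esub> b | a b. a \<in> A \<and> b \<in> B}),
               rsmult = (\<lambda>A r. {rsmult M a r \<oplus>\<^bsub>M\<^esub> c | a c. a \<in> A \<and> c \<in> C})\<rparr>"

definition rhom :: "'r ring \<Rightarrow> ('r, 'a) rmod \<Rightarrow> ('r, 'b) rmod \<Rightarrow> ('a \<Rightarrow> 'b) \<Rightarrow> bool" where
  "rhom R A B f \<longleftrightarrow> f \<in> carrier A \<rightarrow> carrier B \<and>
     (\<forall>x\<in>carrier A. \<forall>y\<in>carrier A. f (x \<oplus>\<^bsub>A\<^esub> y) = f x \<oplus>\<^bsub>B\<^esub> f y) \<and>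
     (\<forall>x\<in>carrier A. \<forall>r\<in>carrier R. f (rsmult A x r) = rsmult B (f x) r)"

definition small_in :: "'r ring \<Rightarrow> ('r, 'a) rmod \<Rightarrow> 'a set \<Rightarrow> bool" where
  "small_in R Q K \<longleftrightarrow> K \<subseteq> carrier Q \<and>
     (\<forall>L. rsubmodule R Q L \<and> msum Q K L = carrier Q \<longrightarrow> L = carrier Q)"

definition supplement :: "'r ring \<Rightarrow> ('r, 'm) rmod \<Rightarrow> 'm set \<Rightarrow> 'm set \<Rightarrow> bool" where
  "supplement R M X S \<longleftrightarrow> rsubmodule R M S \<and> msum M X S = carrier M \<and>
     small_in R (submod M S) (X \<inter> S)"

definition rel_projective :: "'r ring \<Rightarrow> ('r, 'm) rmod \<Rightarrow> ('r, 'm) rmod \<Rightarrow> bool" where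
  "rel_projective R A B \<longleftrightarrow>
     (\<forall>C f. rsubmodule R B C \<and> rhom R A (quot B C) f \<longrightarrow>
        (\<exists>h. rhom R A B h \<and> (\<forall>a\<in>carrier A. mcoset B C (h a) = f a)))"

definition int_dsum :: "'r ring \<Rightarrow> ('r, 'm) rmod \<Rightarrow> 'm set \<Rightarrow> 'm set \<Rightarrow> bool" where
  "int_dsum R M D D' \<longleftrightarrow> rsubmodule R M D \<and> rsubmodule R M D' \<and>
     msum M D D' = carrier M \<and> D \<inter> D' = {\<zero>\<^bsub>M\<^esub>}"

definition direct_summand :: "'r ring \<Rightarrow> ('r, 'm) rmod \<Rightarrow> 'm set \<Rightarrow> bool" where
  "direct_summand R M D \<longleftrightarrow> (\<exists>D'. int_dsum R M D D')"

definition beta_star :: "'r ring \<Rightarrow> ('r, 'm) rmod \<Rightarrow> 'm set \<Rightarrow> 'm set \<Rightarrow> bool" where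
  "beta_star R M X Y \<longleftrightarrow>
     small_in R (quot M X) (mcoset M X ` msum M X Y) \<and>
     small_in R (quot M Y) (mcoset M Y ` msum M X Y)"

definition cyclic_sub :: "'r ring \<Rightarrow> ('r, 'm) rmod \<Rightarrow> 'm \<Rightarrow> 'm set" where
  "cyclic_sub R M m = {rsmult M m r | r. r \<in> carrier R}"

definition is_cyclic_submodule :: "'r ring \<Rightarrow> ('r, 'm) rmod \<Rightarrow> 'm set \<Rightarrow> bool" where
  "is_cyclic_submodule R M X \<longleftrightarrow> (\<exists>m\<in>carrier M. X = cyclic_sub R M m)"

definition principally_goldie_star_lifting :: "'r ring \<Rightarrow> ('r, 'm) rmod \<Rightarrow> bool" where
  "principally_goldie_star_lifting R M \<longleftrightarrow>
     (\<forall>X. is_cyclic_submodule R M X \<longrightarrow>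
        (\<exists>D. direct_summand R M D \<and> beta_star R M X D))"

end

theory Submission
  imports Defs
begin

(* Put C = X \<inter> D'.  Since M = X + D', each d \<in> D is congruent
   modulo X to some e \<in> D', and e is unique modulo C; this yields a
   homomorphism D \<rightarrow> D'/C.  By D'-projectivity it lifts to h : D \<rightarrow> D' with
   d - h d \<in> X for all d \<in> D.  The "graph" A = {d - h d | d \<in> D} is then a
   complement of D' contained in X, and X \<beta>* A holds: (X + A)/X = 0, while
   (X + A)/A = X/A is small in M/A because M/A \<cong> D' carries X/A to C \<ll> D'. *)

text \<open>In HOL-Algebra the additive inverse is defined by a definite description;
  this is its characterisation, valid in any structure with an addition.\<close>
lemma a_inv_unique:
  fixes Q :: "('a, 'b) ring_scheme"
  assumes "y \<in> carrier Q" "x \<oplus>\<^bsub>Q\<^esub> y = \<zero>\<^bsub>Q\<^esub>" "y \<oplus>\<^bsub>Q\<^esub> x = \<zero>\<^bsub>Q\<^esub>"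
    and "\<And>z. z \<in> carrier Q \<Longrightarrow> x \<oplus>\<^bsub>Q\<^esub> z = \<zero>\<^bsub>Q\<^esub> \<Longrightarrow> z = y"
  shows "\<ominus>\<^bsub>Q\<^esub> x = y"
  unfolding a_inv_def m_inv_def
proof (rule the_equality)
  show "y \<in> carrier (add_monoid Q) \<and> x \<otimes>\<^bsub>add_monoid Q\<^esub> y = \<one>\<^bsub>add_monoid Q\<^esub>
        \<and> y \<otimes>\<^bsub>add_monoid Q\<^esub> x = \<one>\<^bsub>add_monoid Q\<^esub>"
    using assms(1-3) by simp
next
  fix z
  assume "z \<in> carrier (add_monoid Q) \<and> x \<otimes>\<^bsub>add_monoid Q\<^esub> z = \<one>\<^bsub>add_monoid Q\<^esub>
          \<and> z \<otimes>\<^bsub>add_monoid Q\<^esub> x = \<one>\<^bsub>add_monoid Q\<^esub>"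
  then show "z = y" using assms(4) by simp
qed

definition hom_graph :: "('r, 'm) rmod \<Rightarrow> ('m \<Rightarrow> 'm) \<Rightarrow> 'm set \<Rightarrow> 'm set" where
  "hom_graph M h D = (\<lambda>d. d \<ominus>\<^bsub>M\<^esub> h d) ` D"

text \<open>The elements of S congruent to d modulo X.  When M = X + S this is a coset
  of X \<inter> S in S: it is the image of d under M/X \<cong> S/(X \<inter> S).\<close>
definition proj_class :: "('r, 'm) rmod \<Rightarrow> 'm set \<Rightarrow> 'm set \<Rightarrow> 'm \<Rightarrow> 'm set" where
  "proj_class M X S d = {e \<in> S. d \<ominus>\<^bsub>M\<^esub> e \<in> X}"

locale right_module =
  fixes R :: "'r ring" and M :: "('r, 'm) rmod"
  assumes is_rmodule: "rmodule R M"
begin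

sublocale G: abelian_group M
  using is_rmodule unfolding rmodule_def by auto

lemma ring_R: "ring R"
  using is_rmodule unfolding rmodule_def by auto

lemma smult_closed [simp]:
  "x \<in> carrier M \<Longrightarrow> r \<in> carrier R \<Longrightarrow> rsmult M x r \<in> carrier M"
  using is_rmodule unfolding rmodule_def by auto

lemma smult_add_left:
  "x \<in> carrier M \<Longrightarrow> y \<in> carrier M \<Longrightarrow> r \<in> carrier R \<Longrightarrow>
   rsmult M (x \<oplus>\<^bsub>M\<^esub> y) r = rsmult M x r \<oplus>\<^bsub>M\<^esub> rsmult M y r"
  using is_rmodule unfolding rmodule_def by auto

lemma smult_add_right:
  "x \<in> carrier M \<Longrightarrow> r \<in> carrier R \<Longrightarrow> s \<in> carrier R \<Longrightarrow>
   rsmult M x (r \<oplus>\<^bsub>R\<^esub> s) = rsmult M x r \<oplus>\<^bsub>M\<^esub> rsmult M x s"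
  using is_rmodule unfolding rmodule_def by auto

lemma smult_assoc:
  "x \<in> carrier M \<Longrightarrow> r \<in> carrier R \<Longrightarrow> s \<in> carrier R \<Longrightarrow>
   rsmult M (rsmult M x r) s = rsmult M x (r \<otimes>\<^bsub>R\<^esub> s)"
  using is_rmodule unfolding rmodule_def by auto

lemma add_right_idempotent:
  "a \<in> carrier M \<Longrightarrow> b \<in> carrier M \<Longrightarrow> a \<oplus>\<^bsub>M\<^esub> b = a \<Longrightarrow> b = \<zero>\<^bsub>M\<^esub>"
  by (metis G.add.l_cancel_one)

lemma neg_add_cancel:
  "x \<in> carrier M \<Longrightarrow> y \<in> carrier M \<Longrightarrow> x \<oplus>\<^bsub>M\<^esub> (y \<oplus>\<^bsub>M\<^esub> \<ominus>\<^bsub>M\<^esub> x) = y"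
  by (metis G.a_comm G.a_inv_closed G.r_neg2)

lemma neg_zero: "\<ominus>\<^bsub>M\<^esub> \<zero>\<^bsub>M\<^esub> = \<zero>\<^bsub>M\<^esub>"
  by (metis G.zero_closed G.r_zero G.minus_equality)

lemmas group_simps =
  neg_zero G.minus_eq G.minus_add G.minus_minus G.a_ac G.r_neg G.l_neg G.r_neg1 G.r_neg2 neg_add_cancel

lemma diff_add_cancel:
  "a \<in> carrier M \<Longrightarrow> b \<in> carrier M \<Longrightarrow> (a \<ominus>\<^bsub>M\<^esub> b) \<oplus>\<^bsub>M\<^esub> b = a"
  by (simp add: group_simps)

lemma add_diff_cancel:
  "a \<in> carrier M \<Longrightarrow> b \<in> carrier M \<Longrightarrow> (a \<oplus>\<^bsub>M\<^esub> b) \<ominus>\<^bsub>M\<^esub> b = a"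
  by (simp add: group_simps)

lemma add_diff_cancel_left:
  "a \<in> carrier M \<Longrightarrow> b \<in> carrier M \<Longrightarrow> (a \<oplus>\<^bsub>M\<^esub> b) \<ominus>\<^bsub>M\<^esub> a = b"
  by (simp add: group_simps)

lemma diff_self:
  "a \<in> carrier M \<Longrightarrow> a \<ominus>\<^bsub>M\<^esub> a = \<zero>\<^bsub>M\<^esub>"
  by (simp add: group_simps)

lemma diff_diff_right:
  "a \<in> carrier M \<Longrightarrow> b \<in> carrier M \<Longrightarrow> c \<in> carrier M \<Longrightarrow>
   (a \<ominus>\<^bsub>M\<^esub> c) \<ominus>\<^bsub>M\<^esub> (b \<ominus>\<^bsub>M\<^esub> c) = a \<ominus>\<^bsub>M\<^esub> b"
  by (simp add: group_simps)

lemma diff_diff_left: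
  "a \<in> carrier M \<Longrightarrow> b \<in> carrier M \<Longrightarrow> c \<in> carrier M \<Longrightarrow>
   (c \<ominus>\<^bsub>M\<^esub> b) \<ominus>\<^bsub>M\<^esub> (c \<ominus>\<^bsub>M\<^esub> a) = a \<ominus>\<^bsub>M\<^esub> b"
  by (simp add: group_simps)

lemma add_diff_add:
  "a \<in> carrier M \<Longrightarrow> b \<in> carrier M \<Longrightarrow> c \<in> carrier M \<Longrightarrow> d \<in> carrier M \<Longrightarrow>
   (a \<oplus>\<^bsub>M\<^esub> b) \<ominus>\<^bsub>M\<^esub> (c \<oplus>\<^bsub>M\<^esub> d) = (a \<ominus>\<^bsub>M\<^esub> c) \<oplus>\<^bsub>M\<^esub> (b \<ominus>\<^bsub>M\<^esub> d)"
  by (simp add: group_simps)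

lemma neg_diff:
  "a \<in> carrier M \<Longrightarrow> b \<in> carrier M \<Longrightarrow>
   \<ominus>\<^bsub>M\<^esub> (a \<ominus>\<^bsub>M\<^esub> b) = (\<ominus>\<^bsub>M\<^esub> a) \<ominus>\<^bsub>M\<^esub> (\<ominus>\<^bsub>M\<^esub> b)"
  by (simp add: group_simps)

lemma diff_add_telescope:
  "a \<in> carrier M \<Longrightarrow> b \<in> carrier M \<Longrightarrow> c \<in> carrier M \<Longrightarrow>
   (a \<ominus>\<^bsub>M\<^esub> b) \<oplus>\<^bsub>M\<^esub> (b \<oplus>\<^bsub>M\<^esub> c) = a \<oplus>\<^bsub>M\<^esub> c"
  by (simp add: group_simps)

lemma diff_split:
  "a \<in> carrier M \<Longrightarrow> b \<in> carrier M \<Longrightarrow> c \<in> carrier M \<Longrightarrow>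
   (a \<ominus>\<^bsub>M\<^esub> (b \<oplus>\<^bsub>M\<^esub> c)) \<oplus>\<^bsub>M\<^esub> b = a \<ominus>\<^bsub>M\<^esub> c"
  by (simp add: group_simps)

lemma smult_zero_right:
  assumes x: "x \<in> carrier M"
  shows "rsmult M x \<zero>\<^bsub>R\<^esub> = \<zero>\<^bsub>M\<^esub>"
proof -
  have z: "\<zero>\<^bsub>R\<^esub> \<in> carrier R" using ring_R ring.ring_simprules(2) by blast
  have "rsmult M x \<zero>\<^bsub>R\<^esub> = rsmult M x (\<zero>\<^bsub>R\<^esub> \<oplus>\<^bsub>R\<^esub> \<zero>\<^bsub>R\<^esub>)"
    using ring_R z by (simp add: ring.ring_simprules(15))
  also have "\<dots> = rsmult M x \<zero>\<^bsub>R\<^esub> \<oplus>\<^bsub>M\<^esub> rsmult M x \<zero>\<^bsub>R\<^esub>"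
    using smult_add_right x z by blast
  finally show ?thesis using add_right_idempotent x z smult_closed by metis
qed

lemma smult_zero_left:
  assumes r: "r \<in> carrier R"
  shows "rsmult M \<zero>\<^bsub>M\<^esub> r = \<zero>\<^bsub>M\<^esub>"
proof -
  have "rsmult M \<zero>\<^bsub>M\<^esub> r = rsmult M \<zero>\<^bsub>M\<^esub> r \<oplus>\<^bsub>M\<^esub> rsmult M \<zero>\<^bsub>M\<^esub> r"
    using smult_add_left[OF G.zero_closed G.zero_closed r] by simp
  then show ?thesis using add_right_idempotent r smult_closed G.zero_closed by metis
qed

lemma smult_neg:
  assumes x: "x \<in> carrier M" and r: "r \<in> carrier R"
  shows "rsmult M (\<ominus>\<^bsub>M\<^esub> x) r = \<ominus>\<^bsub>M\<^esub> rsmult M x r"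
proof -
  have "rsmult M (\<ominus>\<^bsub>M\<^esub> x) r \<oplus>\<^bsub>M\<^esub> rsmult M x r = \<zero>\<^bsub>M\<^esub>"
    using smult_add_left[of "\<ominus>\<^bsub>M\<^esub> x" x r] x r smult_zero_left by (simp add: G.l_neg)
  then show ?thesis using x r by (metis G.a_inv_closed G.minus_equality smult_closed)
qed

lemma smult_diff:
  "x \<in> carrier M \<Longrightarrow> y \<in> carrier M \<Longrightarrow> r \<in> carrier R \<Longrightarrow>
   rsmult M (x \<ominus>\<^bsub>M\<^esub> y) r = rsmult M x r \<ominus>\<^bsub>M\<^esub> rsmult M y r"
  by (simp add: G.minus_eq smult_add_left smult_neg)

lemma submoduleD:
  assumes "rsubmodule R M C"
  shows "C \<subseteq> carrier M" "\<zero>\<^bsub>M\<^esub> \<in> C" "\<And>x y. x \<in> C \<Longrightarrow> y \<in> C \<Longrightarrow> x \<oplus>\<^bsub>M\<^esub> y \<in> C"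
    "\<And>x. x \<in> C \<Longrightarrow> \<ominus>\<^bsub>M\<^esub> x \<in> C"
    "\<And>x r. x \<in> C \<Longrightarrow> r \<in> carrier R \<Longrightarrow> rsmult M x r \<in> C"
  using assms unfolding rsubmodule_def by auto

lemma submodule_diff:
  "rsubmodule R M C \<Longrightarrow> x \<in> C \<Longrightarrow> y \<in> C \<Longrightarrow> x \<ominus>\<^bsub>M\<^esub> y \<in> C"
  using submoduleD by (simp add: G.minus_eq)

lemma submodule_inter:
  "rsubmodule R M X \<Longrightarrow> rsubmodule R M Y \<Longrightarrow> rsubmodule R M (X \<inter> Y)"
  unfolding rsubmodule_def by auto

lemma msum_absorb:
  assumes X: "rsubmodule R M X" and AX: "A \<subseteq> X" and A0: "\<zero>\<^bsub>M\<^esub> \<in> A"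
  shows "msum M X A = X"
proof
  show "msum M X A \<subseteq> X" unfolding msum_def using submoduleD(3)[OF X] AX by auto
  show "X \<subseteq> msum M X A"
  proof
    fix x assume "x \<in> X"
    then have "x = x \<oplus>\<^bsub>M\<^esub> \<zero>\<^bsub>M\<^esub>" using submoduleD(1)[OF X] by auto
    then show "x \<in> msum M X A" unfolding msum_def using \<open>x \<in> X\<close> A0 by blast
  qed
qed

lemma submod_simps [simp]:
  "carrier (submod M S) = S" "add (submod M S) = add M"
  "zero (submod M S) = zero M" "rsmult (submod M S) = rsmult M"
  "mcoset (submod M S) = mcoset M" "msum (submod M S) = msum M"
  unfolding submod_def by (auto simp: mcoset_def msum_def fun_eq_iff)

lemma submod_neg:
  assumes S: "rsubmodule R M S" and x: "x \<in> S"
  shows "\<ominus>\<^bsub>submod M S\<^esub> x = \<ominus>\<^bsub>M\<^esub> x"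
proof (rule a_inv_unique)
  have xc: "x \<in> carrier M" using x submoduleD(1)[OF S] by auto
  show "\<ominus>\<^bsub>M\<^esub> x \<in> carrier (submod M S)" using submoduleD(4)[OF S x] by simp
  show "x \<oplus>\<^bsub>submod M S\<^esub> \<ominus>\<^bsub>M\<^esub> x = \<zero>\<^bsub>submod M S\<^esub>" using xc by (simp add: G.r_neg)
  show "\<ominus>\<^bsub>M\<^esub> x \<oplus>\<^bsub>submod M S\<^esub> x = \<zero>\<^bsub>submod M S\<^esub>" using xc by (simp add: G.l_neg)
  fix y assume "y \<in> carrier (submod M S)" "x \<oplus>\<^bsub>submod M S\<^esub> y = \<zero>\<^bsub>submod M S\<^esub>"
  then have "y \<in> S" "x \<oplus>\<^bsub>M\<^esub> y = \<zero>\<^bsub>M\<^esub>" by auto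
  then show "y = \<ominus>\<^bsub>M\<^esub> x" using xc submoduleD(1)[OF S]
    by (metis G.a_comm G.minus_equality subsetD)
qed

lemma submodule_of_submod:
  assumes S: "rsubmodule R M S" and C: "rsubmodule R M C" and CS: "C \<subseteq> S"
  shows "rsubmodule R (submod M S) C"
  unfolding rsubmodule_def using submoduleD[OF C] CS submod_neg[OF S] by auto

lemma cyclic_submodule:
  assumes m: "m \<in> carrier M"
  shows "rsubmodule R M (cyclic_sub R M m)"
proof -
  interpret R: ring R by (rule ring_R)
  have "\<zero>\<^bsub>M\<^esub> \<in> cyclic_sub R M m"
    unfolding cyclic_sub_def using smult_zero_right[OF m] R.zero_closed by force
  moreover have "x \<oplus>\<^bsub>M\<^esub> y \<in> cyclic_sub R M m"
    if x: "x \<in> cyclic_sub R M m" and y: "y \<in> cyclic_sub R M m" for x y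
  proof -
    obtain r s where "r \<in> carrier R" "s \<in> carrier R" "x = rsmult M m r" "y = rsmult M m s"
      using x y unfolding cyclic_sub_def by auto
    then have "r \<oplus>\<^bsub>R\<^esub> s \<in> carrier R" "x \<oplus>\<^bsub>M\<^esub> y = rsmult M m (r \<oplus>\<^bsub>R\<^esub> s)"
      using smult_add_right[OF m] by auto
    then show ?thesis unfolding cyclic_sub_def by blast
  qed
  moreover have "\<ominus>\<^bsub>M\<^esub> x \<in> cyclic_sub R M m" if x: "x \<in> cyclic_sub R M m" for x
  proof -
    obtain r where r: "r \<in> carrier R" "x = rsmult M m r"
      using x unfolding cyclic_sub_def by auto
    have "rsmult M m r \<oplus>\<^bsub>M\<^esub> rsmult M m (\<ominus>\<^bsub>R\<^esub> r) = \<zero>\<^bsub>M\<^esub>"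
      using smult_add_right[OF m r(1) R.a_inv_closed[OF r(1)]] smult_zero_right[OF m] r
      by (simp add: R.r_neg)
    then have "\<ominus>\<^bsub>M\<^esub> x = rsmult M m (\<ominus>\<^bsub>R\<^esub> r)"
      using r m by (metis G.a_comm G.minus_equality R.a_inv_closed smult_closed)
    then show ?thesis unfolding cyclic_sub_def using r by blast
  qed
  moreover have "rsmult M x r \<in> cyclic_sub R M m"
    if x: "x \<in> cyclic_sub R M m" and r: "r \<in> carrier R" for x r
  proof -
    obtain s where "s \<in> carrier R" "x = rsmult M m s"
      using x unfolding cyclic_sub_def by auto
    then have "s \<otimes>\<^bsub>R\<^esub> r \<in> carrier R" "rsmult M x r = rsmult M m (s \<otimes>\<^bsub>R\<^esub> r)"
      using smult_assoc[OF m] r by auto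
    then show ?thesis unfolding cyclic_sub_def by blast
  qed
  moreover have "cyclic_sub R M m \<subseteq> carrier M" unfolding cyclic_sub_def using m by auto
  ultimately show ?thesis unfolding rsubmodule_def by blast
qed

subsection \<open>Cosets and the quotient module\<close>

lemma coset_mem:
  assumes C: "rsubmodule R M C" and x: "x \<in> carrier M"
  shows "z \<in> mcoset M C x \<longleftrightarrow> z \<in> carrier M \<and> z \<ominus>\<^bsub>M\<^esub> x \<in> C"
proof
  assume "z \<in> mcoset M C x"
  then obtain c where c: "c \<in> C" "z = x \<oplus>\<^bsub>M\<^esub> c" unfolding mcoset_def by auto
  then show "z \<in> carrier M \<and> z \<ominus>\<^bsub>M\<^esub> x \<in> C"
    using submoduleD(1)[OF C] x add_diff_cancel_left by auto
next
  assume z: "z \<in> carrier M \<and> z \<ominus>\<^bsub>M\<^esub> x \<in> C"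
  then have "z = x \<oplus>\<^bsub>M\<^esub> (z \<ominus>\<^bsub>M\<^esub> x)"
    using x diff_add_cancel by (simp add: G.a_comm)
  then show "z \<in> mcoset M C x" unfolding mcoset_def using z by blast
qed

lemma coset_self: "rsubmodule R M C \<Longrightarrow> x \<in> carrier M \<Longrightarrow> x \<in> mcoset M C x"
  using coset_mem submoduleD(2) diff_self by simp

lemma coset_eq:
  assumes C: "rsubmodule R M C" and x: "x \<in> carrier M" and y: "y \<in> carrier M"
  shows "mcoset M C x = mcoset M C y \<longleftrightarrow> x \<ominus>\<^bsub>M\<^esub> y \<in> C"
proof
  assume "mcoset M C x = mcoset M C y"
  then show "x \<ominus>\<^bsub>M\<^esub> y \<in> C" using coset_self[OF C x] coset_mem[OF C y] by auto
next
  assume xy: "x \<ominus>\<^bsub>M\<^esub> y \<in> C"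
  have yx: "y \<ominus>\<^bsub>M\<^esub> x \<in> C"
    using submoduleD(4)[OF C xy] x y by (simp add: group_simps)
  have "z \<ominus>\<^bsub>M\<^esub> y = (z \<ominus>\<^bsub>M\<^esub> x) \<oplus>\<^bsub>M\<^esub> (x \<ominus>\<^bsub>M\<^esub> y)"
       "z \<ominus>\<^bsub>M\<^esub> x = (z \<ominus>\<^bsub>M\<^esub> y) \<oplus>\<^bsub>M\<^esub> (y \<ominus>\<^bsub>M\<^esub> x)" if "z \<in> carrier M" for z
    using that x y by (simp_all add: group_simps)
  then show "mcoset M C x = mcoset M C y"
    unfolding set_eq_iff coset_mem[OF C x] coset_mem[OF C y]
    using xy yx submoduleD(3)[OF C] by metis
qed

lemma coset_zero: "rsubmodule R M C \<Longrightarrow> mcoset M C \<zero>\<^bsub>M\<^esub> = C"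
  unfolding mcoset_def using submoduleD(1) by force

lemma quot_zero: "\<zero>\<^bsub>quot M C\<^esub> = C"
  unfolding quot_def by simp

lemma quot_carrier: "carrier (quot M C) = mcoset M C ` carrier M"
  unfolding quot_def by simp

lemma quot_submod_simps [simp]:
  "carrier (quot (submod M S) C) = mcoset M C ` S"
  "add (quot (submod M S) C) = add (quot M C)"
  "rsmult (quot (submod M S) C) = rsmult (quot M C)"
  unfolding quot_def by simp_all

lemma quot_add:
  assumes C: "rsubmodule R M C" and x: "x \<in> carrier M" and y: "y \<in> carrier M"
  shows "mcoset M C x \<oplus>\<^bsub>quot M C\<^esub> mcoset M C y = mcoset M C (x \<oplus>\<^bsub>M\<^esub> y)"
proof -
  have "{a \<oplus>\<^bsub>M\<^esub> b | a b. a \<in> mcoset M C x \<and> b \<in> mcoset M C y} = mcoset M C (x \<oplus>\<^bsub>M\<^esub> y)"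
  proof (rule Set.set_eqI, rule iffI)
    fix z assume "z \<in> {a \<oplus>\<^bsub>M\<^esub> b | a b. a \<in> mcoset M C x \<and> b \<in> mcoset M C y}"
    then obtain a b where ab: "z = a \<oplus>\<^bsub>M\<^esub> b" "a \<in> mcoset M C x" "b \<in> mcoset M C y" by auto
    then have a: "a \<in> carrier M" "a \<ominus>\<^bsub>M\<^esub> x \<in> C" and b: "b \<in> carrier M" "b \<ominus>\<^bsub>M\<^esub> y \<in> C"
      using coset_mem[OF C x] coset_mem[OF C y] by auto
    then show "z \<in> mcoset M C (x \<oplus>\<^bsub>M\<^esub> y)"
      using ab x y coset_mem[OF C] submoduleD(3)[OF C] add_diff_add by simp
  next
    fix z assume "z \<in> mcoset M C (x \<oplus>\<^bsub>M\<^esub> y)"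
    then have z: "z \<in> carrier M" "z \<ominus>\<^bsub>M\<^esub> y \<ominus>\<^bsub>M\<^esub> x \<in> C"
      using coset_mem[OF C] x y by (auto simp: group_simps)
    have "z \<ominus>\<^bsub>M\<^esub> y \<in> mcoset M C x" using coset_mem[OF C x] z y by simp
    moreover have "y \<in> mcoset M C y" using coset_self[OF C y] .
    moreover have "z = (z \<ominus>\<^bsub>M\<^esub> y) \<oplus>\<^bsub>M\<^esub> y" using z y diff_add_cancel by simp
    ultimately show "z \<in> {a \<oplus>\<^bsub>M\<^esub> b | a b. a \<in> mcoset M C x \<and> b \<in> mcoset M C y}" by blast
  qed
  then show ?thesis unfolding quot_def by simp
qed

lemma quot_smult:
  assumes C: "rsubmodule R M C" and x: "x \<in> carrier M" and r: "r \<in> carrier R"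
  shows "rsmult (quot M C) (mcoset M C x) r = mcoset M C (rsmult M x r)"
proof -
  have "{rsmult M a r \<oplus>\<^bsub>M\<^esub> c | a c. a \<in> mcoset M C x \<and> c \<in> C} = mcoset M C (rsmult M x r)"
  proof (rule Set.set_eqI, rule iffI)
    fix z assume "z \<in> {rsmult M a r \<oplus>\<^bsub>M\<^esub> c | a c. a \<in> mcoset M C x \<and> c \<in> C}"
    then obtain a c where ac: "z = rsmult M a r \<oplus>\<^bsub>M\<^esub> c" "a \<in> mcoset M C x" "c \<in> C" by auto
    then have a: "a \<in> carrier M" "a \<ominus>\<^bsub>M\<^esub> x \<in> C" and cc: "c \<in> carrier M"
      using coset_mem[OF C x] submoduleD(1)[OF C] by auto
    have "z \<ominus>\<^bsub>M\<^esub> rsmult M x r = rsmult M (a \<ominus>\<^bsub>M\<^esub> x) r \<oplus>\<^bsub>M\<^esub> c"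
      using ac a cc x r by (simp add: smult_add_left smult_neg group_simps)
    then show "z \<in> mcoset M C (rsmult M x r)"
      using ac a cc x r coset_mem[OF C] submoduleD(3,5)[OF C] by simp
  next
    fix z assume "z \<in> mcoset M C (rsmult M x r)"
    then have z: "z \<in> carrier M" "z \<ominus>\<^bsub>M\<^esub> rsmult M x r \<in> C" using coset_mem[OF C] x r by auto
    then have "z = rsmult M x r \<oplus>\<^bsub>M\<^esub> (z \<ominus>\<^bsub>M\<^esub> rsmult M x r)"
      using diff_add_cancel x r by (simp add: G.a_comm)
    then show "z \<in> {rsmult M a r \<oplus>\<^bsub>M\<^esub> c | a c. a \<in> mcoset M C x \<and> c \<in> C}"
      using coset_self[OF C x] z by blast
  qed
  then show ?thesis unfolding quot_def by simp
qed

lemma quot_neg: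
  assumes C: "rsubmodule R M C" and x: "x \<in> carrier M"
  shows "\<ominus>\<^bsub>quot M C\<^esub> (mcoset M C x) = mcoset M C (\<ominus>\<^bsub>M\<^esub> x)"
proof (rule a_inv_unique)
  have nx: "\<ominus>\<^bsub>M\<^esub> x \<in> carrier M" using x by simp
  show "mcoset M C (\<ominus>\<^bsub>M\<^esub> x) \<in> carrier (quot M C)" using nx by (simp add: quot_carrier)
  show "mcoset M C x \<oplus>\<^bsub>quot M C\<^esub> mcoset M C (\<ominus>\<^bsub>M\<^esub> x) = \<zero>\<^bsub>quot M C\<^esub>"
    using quot_add[OF C x nx] coset_zero[OF C] x by (simp add: quot_zero G.r_neg)
  show "mcoset M C (\<ominus>\<^bsub>M\<^esub> x) \<oplus>\<^bsub>quot M C\<^esub> mcoset M C x = \<zero>\<^bsub>quot M C\<^esub>"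
    using quot_add[OF C nx x] coset_zero[OF C] x by (simp add: quot_zero G.l_neg)
  fix y assume "y \<in> carrier (quot M C)" "mcoset M C x \<oplus>\<^bsub>quot M C\<^esub> y = \<zero>\<^bsub>quot M C\<^esub>"
  then obtain w where w: "w \<in> carrier M" "y = mcoset M C w" "mcoset M C x \<oplus>\<^bsub>quot M C\<^esub> y = C"
    by (auto simp: quot_carrier quot_zero)
  then have "mcoset M C (x \<oplus>\<^bsub>M\<^esub> w) = mcoset M C \<zero>\<^bsub>M\<^esub>"
    using quot_add[OF C x] coset_zero[OF C] by simp
  then have "w \<ominus>\<^bsub>M\<^esub> (\<ominus>\<^bsub>M\<^esub> x) \<in> C"
    using coset_eq[OF C] x w by (simp add: group_simps)
  then show "y = mcoset M C (\<ominus>\<^bsub>M\<^esub> x)" using coset_eq[OF C] w x by simp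
qed

lemma coset_rep_in:
  assumes A: "rsubmodule R M A" and S: "S \<subseteq> carrier M" and AS: "msum M A S = carrier M"
    and m: "m \<in> carrier M"
  obtains e where "e \<in> S" "mcoset M A m = mcoset M A e"
proof -
  have "m \<in> msum M A S" using m AS by simp
  then obtain a e where ae: "a \<in> A" "e \<in> S" "m = a \<oplus>\<^bsub>M\<^esub> e"
    unfolding msum_def by auto
  then have "m \<ominus>\<^bsub>M\<^esub> e = a" using S submoduleD(1)[OF A] add_diff_cancel by auto
  then show thesis using that ae coset_eq[OF A m] S by auto
qed

lemma rhom_submodD:
  assumes "rhom R (submod M D) (submod M S) h"
  shows "\<And>x. x \<in> D \<Longrightarrow> h x \<in> S"
    "\<And>x y. x \<in> D \<Longrightarrow> y \<in> D \<Longrightarrow> h (x \<oplus>\<^bsub>M\<^esub> y) = h x \<oplus>\<^bsub>M\<^esub> h y"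
    "\<And>x r. x \<in> D \<Longrightarrow> r \<in> carrier R \<Longrightarrow> h (rsmult M x r) = rsmult M (h x) r"
  using assms unfolding rhom_def by auto

subsection \<open>Smallness in quotients\<close>

lemma quot_zero_small:
  assumes X: "rsubmodule R M X"
  shows "small_in R (quot M X) {X}"
  unfolding small_in_def
proof (intro conjI allI impI)
  show "{X} \<subseteq> carrier (quot M X)"
    using coset_zero[OF X] by (auto simp: quot_carrier)
  fix L assume L: "rsubmodule R (quot M X) L \<and> msum (quot M X) {X} L = carrier (quot M X)"
  have "msum (quot M X) {X} L \<subseteq> L"
  proof
    fix z assume "z \<in> msum (quot M X) {X} L"
    then obtain l where l: "l \<in> L" "z = X \<oplus>\<^bsub>quot M X\<^esub> l" unfolding msum_def by auto
    then obtain y where y: "y \<in> carrier M" "l = mcoset M X y"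
      using L unfolding rsubmodule_def by (auto simp: quot_carrier)
    have "z = mcoset M X (\<zero>\<^bsub>M\<^esub> \<oplus>\<^bsub>M\<^esub> y)"
      using l y quot_add[OF X G.zero_closed y(1)] coset_zero[OF X] by simp
    then show "z \<in> L" using l y by simp
  qed
  then show "L = carrier (quot M X)" using L unfolding rsubmodule_def by auto
qed

lemma preimage_submodule:
  assumes A: "rsubmodule R M A" and S: "rsubmodule R M S" and L: "rsubmodule R (quot M A) L"
  shows "rsubmodule R (submod M S) {e \<in> S. mcoset M A e \<in> L}"
proof -
  have L0: "A \<in> L"
    and Ladd: "\<And>p q. p \<in> L \<Longrightarrow> q \<in> L \<Longrightarrow> p \<oplus>\<^bsub>quot M A\<^esub> q \<in> L"
    and Lneg: "\<And>p. p \<in> L \<Longrightarrow> \<ominus>\<^bsub>quot M A\<^esub> p \<in> L"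
    and Lsmult: "\<And>p r. p \<in> L \<Longrightarrow> r \<in> carrier R \<Longrightarrow> rsmult (quot M A) p r \<in> L"
    using L unfolding rsubmodule_def by (auto simp: quot_zero)
  have Sc: "S \<subseteq> carrier M" using submoduleD(1)[OF S] .
  show ?thesis
    unfolding rsubmodule_def
  proof (intro conjI ballI)
    show "{e \<in> S. mcoset M A e \<in> L} \<subseteq> carrier (submod M S)" by auto
    show "\<zero>\<^bsub>submod M S\<^esub> \<in> {e \<in> S. mcoset M A e \<in> L}"
      using submoduleD(2)[OF S] coset_zero[OF A] L0 by simp
  next
    fix x y assume x: "x \<in> {e \<in> S. mcoset M A e \<in> L}" and y: "y \<in> {e \<in> S. mcoset M A e \<in> L}"
    then have xy: "x \<in> carrier M" "y \<in> carrier M" using Sc by auto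
    have "mcoset M A (x \<oplus>\<^bsub>M\<^esub> y) \<in> L"
      using Ladd[of "mcoset M A x" "mcoset M A y"] quot_add[OF A xy] x y by simp
    then show "x \<oplus>\<^bsub>submod M S\<^esub> y \<in> {e \<in> S. mcoset M A e \<in> L}"
      using submoduleD(3)[OF S] x y by auto
  next
    fix x assume x: "x \<in> {e \<in> S. mcoset M A e \<in> L}"
    then have xc: "x \<in> carrier M" using Sc by auto
    have "mcoset M A (\<ominus>\<^bsub>M\<^esub> x) \<in> L"
      using Lneg[of "mcoset M A x"] quot_neg[OF A xc] x by simp
    then show "\<ominus>\<^bsub>submod M S\<^esub> x \<in> {e \<in> S. mcoset M A e \<in> L}"
      using submod_neg[OF S] submoduleD(4)[OF S] x by auto
  next
    fix x r assume x: "x \<in> {e \<in> S. mcoset M A e \<in> L}" and r: "r \<in> carrier R"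
    then have xc: "x \<in> carrier M" using Sc by auto
    have "mcoset M A (rsmult M x r) \<in> L"
      using Lsmult[of "mcoset M A x" r] quot_smult[OF A xc r] x r by simp
    then show "rsmult (submod M S) x r \<in> {e \<in> S. mcoset M A e \<in> L}"
      using submoduleD(5)[OF S] x r by auto
  qed
qed

lemma preimage_supplements:
  assumes X: "rsubmodule R M X" and A: "rsubmodule R M A" and AX: "A \<subseteq> X"
    and S: "rsubmodule R M S" and AS: "msum M A S = carrier M"
    and L: "rsubmodule R (quot M A) L"
    and XL: "msum (quot M A) (mcoset M A ` X) L = carrier (quot M A)"
  shows "msum (submod M S) (X \<inter> S) {e \<in> S. mcoset M A e \<in> L} = carrier (submod M S)"
proof
  have Xc: "X \<subseteq> carrier M" and Sc: "S \<subseteq> carrier M"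
    using submoduleD(1) X S by auto
  show "msum (submod M S) (X \<inter> S) {e \<in> S. mcoset M A e \<in> L} \<subseteq> carrier (submod M S)"
    unfolding msum_def using submoduleD(3)[OF S] by auto
  show "carrier (submod M S) \<subseteq> msum (submod M S) (X \<inter> S) {e \<in> S. mcoset M A e \<in> L}"
  proof
    fix e assume "e \<in> carrier (submod M S)"
    then have e: "e \<in> S" "e \<in> carrier M" using Sc by auto
    then have "mcoset M A e \<in> msum (quot M A) (mcoset M A ` X) L"
      using XL by (auto simp: quot_carrier)
    then obtain u l where ul: "u \<in> X" "l \<in> L" "mcoset M A e = mcoset M A u \<oplus>\<^bsub>quot M A\<^esub> l"
      unfolding msum_def by auto
    obtain y where y: "y \<in> carrier M" "l = mcoset M A y"
      using ul(2) L unfolding rsubmodule_def by (auto simp: quot_carrier)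
    obtain e1 where e1: "e1 \<in> S" "mcoset M A y = mcoset M A e1"
      using coset_rep_in[OF A Sc AS y(1)] .
    have uc: "u \<in> carrier M" and e1c: "e1 \<in> carrier M" using ul e1 Xc Sc by auto
    have "mcoset M A e = mcoset M A (u \<oplus>\<^bsub>M\<^esub> e1)"
      using ul(3) y e1 quot_add[OF A uc e1c] by simp
    then have "e \<ominus>\<^bsub>M\<^esub> (u \<oplus>\<^bsub>M\<^esub> e1) \<in> X"
      using coset_eq[OF A e(2) G.a_closed[OF uc e1c]] AX by auto
    then have "e \<ominus>\<^bsub>M\<^esub> e1 \<in> X"
      using submoduleD(3)[OF X _ ul(1)] diff_split[OF e(2) uc e1c] by metis
    then have "e \<ominus>\<^bsub>M\<^esub> e1 \<in> X \<inter> S" using submodule_diff[OF S e(1) e1(1)] by simp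
    moreover have "e1 \<in> {e \<in> S. mcoset M A e \<in> L}" using e1 ul y by auto
    moreover have "e = (e \<ominus>\<^bsub>M\<^esub> e1) \<oplus>\<^bsub>M\<^esub> e1" using diff_add_cancel e(2) e1c by simp
    ultimately show "e \<in> msum (submod M S) (X \<inter> S) {e \<in> S. mcoset M A e \<in> L}"
      unfolding msum_def by auto
  qed
qed

text \<open>If M = A + S with A \<subseteq> X and X \<inter> S small in S, then X/A is small in M/A:
  a submodule L of M/A with X/A + L = M/A pulls back to a submodule L' of S
  with (X \<inter> S) + L' = S, hence L' = S and so L = M/A.\<close>
lemma small_quotient_by_complement:
  assumes X: "rsubmodule R M X" and A: "rsubmodule R M A" and AX: "A \<subseteq> X"
    and S: "rsubmodule R M S" and AS: "msum M A S = carrier M"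
    and small: "small_in R (submod M S) (X \<inter> S)"
  shows "small_in R (quot M A) (mcoset M A ` X)"
  unfolding small_in_def
proof (intro conjI allI impI)
  have Sc: "S \<subseteq> carrier M" using submoduleD(1)[OF S] .
  show "mcoset M A ` X \<subseteq> carrier (quot M A)"
    using submoduleD(1)[OF X] by (auto simp: quot_carrier)
  fix L assume L: "rsubmodule R (quot M A) L \<and> msum (quot M A) (mcoset M A ` X) L = carrier (quot M A)"
  then have "{e \<in> S. mcoset M A e \<in> L} = S"
    using small preimage_submodule[OF A S] preimage_supplements[OF X A AX S AS]
    unfolding small_in_def by auto
  then have "mcoset M A m \<in> L" if m: "m \<in> carrier M" for m
    using coset_rep_in[OF A Sc AS m] by (metis (mono_tags, lifting) mem_Collect_eq)
  then show "L = carrier (quot M A)"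
    using L unfolding rsubmodule_def by (auto simp: quot_carrier)
qed

lemma beta_star_of_complement:
  assumes X: "rsubmodule R M X" and A: "rsubmodule R M A" and AX: "A \<subseteq> X"
    and S: "rsubmodule R M S" and AS: "msum M A S = carrier M"
    and small: "small_in R (submod M S) (X \<inter> S)"
  shows "beta_star R M X A"
proof -
  have XA: "msum M X A = X" using msum_absorb[OF X AX submoduleD(2)[OF A]] .
  have "mcoset M X x = X" if "x \<in> X" for x
    using that coset_eq[OF X _ G.zero_closed] coset_zero[OF X] submoduleD(1)[OF X]
    by (auto simp: group_simps)
  then have "mcoset M X ` X = {X}" using submoduleD(2)[OF X] by auto
  then show ?thesis
    unfolding beta_star_def XA
    using quot_zero_small[OF X] small_quotient_by_complement[OF X A AX S AS small] by simp
qed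

subsection \<open>Lifting the projection M \<rightarrow> S/(X \<inter> S)\<close>

lemma proj_class_rep:
  assumes XS: "msum M X S = carrier M" and d: "d \<in> carrier M" and X: "rsubmodule R M X"
    and S: "rsubmodule R M S"
  obtains e where "e \<in> S" "d \<ominus>\<^bsub>M\<^esub> e \<in> X"
proof -
  have "d \<in> msum M X S" using d XS by simp
  then obtain x e where xe: "x \<in> X" "e \<in> S" "d = x \<oplus>\<^bsub>M\<^esub> e" unfolding msum_def by auto
  then have "d \<ominus>\<^bsub>M\<^esub> e = x" using add_diff_cancel submoduleD(1) X S by blast
  then show thesis using that xe by simp
qed

lemma proj_class_eq:
  assumes X: "rsubmodule R M X" and S: "rsubmodule R M S" and d: "d \<in> carrier M"
    and e: "e \<in> S" "d \<ominus>\<^bsub>M\<^esub> e \<in> X"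
  shows "proj_class M X S d = mcoset M (X \<inter> S) e"
proof -
  have C: "rsubmodule R M (X \<inter> S)" using submodule_inter[OF X S] .
  have ec: "e \<in> carrier M" using e submoduleD(1)[OF S] by auto
  show ?thesis
  proof (rule Set.set_eqI, rule iffI)
    fix z assume "z \<in> proj_class M X S d"
    then have z: "z \<in> S" "d \<ominus>\<^bsub>M\<^esub> z \<in> X" and zc: "z \<in> carrier M"
      using submoduleD(1)[OF S] unfolding proj_class_def by auto
    have "z \<ominus>\<^bsub>M\<^esub> e = (d \<ominus>\<^bsub>M\<^esub> e) \<ominus>\<^bsub>M\<^esub> (d \<ominus>\<^bsub>M\<^esub> z)"
      using diff_diff_left[OF zc ec d] by simp
    then have "z \<ominus>\<^bsub>M\<^esub> e \<in> X \<inter> S"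
      using submodule_diff[OF X e(2) z(2)] submodule_diff[OF S z(1) e(1)] by simp
    then show "z \<in> mcoset M (X \<inter> S) e" using coset_mem[OF C ec] zc by simp
  next
    fix z assume "z \<in> mcoset M (X \<inter> S) e"
    then have z: "z \<in> carrier M" "z \<ominus>\<^bsub>M\<^esub> e \<in> X" "z \<ominus>\<^bsub>M\<^esub> e \<in> S"
      using coset_mem[OF C ec] by auto
    have "z = (z \<ominus>\<^bsub>M\<^esub> e) \<oplus>\<^bsub>M\<^esub> e" using diff_add_cancel z(1) ec by simp
    then have "z \<in> S" using submoduleD(3)[OF S z(3) e(1)] by simp
    moreover have "d \<ominus>\<^bsub>M\<^esub> z = (d \<ominus>\<^bsub>M\<^esub> e) \<ominus>\<^bsub>M\<^esub> (z \<ominus>\<^bsub>M\<^esub> e)"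
      using diff_diff_right[OF d z(1) ec] by simp
    then have "d \<ominus>\<^bsub>M\<^esub> z \<in> X" using submodule_diff[OF X e(2) z(2)] by simp
    ultimately show "z \<in> proj_class M X S d" unfolding proj_class_def by simp
  qed
qed

lemma proj_class_rhom:
  assumes X: "rsubmodule R M X" and S: "rsubmodule R M S" and XS: "msum M X S = carrier M"
    and D: "D \<subseteq> carrier M"
  shows "rhom R (submod M D) (quot (submod M S) (X \<inter> S)) (proj_class M X S)"
proof -
  have C: "rsubmodule R M (X \<inter> S)" using submodule_inter[OF X S] .
  have Sc: "S \<subseteq> carrier M" using submoduleD(1)[OF S] .
  show ?thesis
    unfolding rhom_def
  proof (intro conjI ballI)
    show "proj_class M X S \<in> carrier (submod M D) \<rightarrow> carrier (quot (submod M S) (X \<inter> S))"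
    proof
      fix d assume "d \<in> carrier (submod M D)"
      then have d: "d \<in> carrier M" using D by auto
      obtain e where "e \<in> S" "d \<ominus>\<^bsub>M\<^esub> e \<in> X" using proj_class_rep[OF XS d X S] .
      then show "proj_class M X S d \<in> carrier (quot (submod M S) (X \<inter> S))"
        using proj_class_eq[OF X S d] by simp
    qed
  next
    fix x y assume "x \<in> carrier (submod M D)" "y \<in> carrier (submod M D)"
    then have x: "x \<in> carrier M" and y: "y \<in> carrier M" using D by auto
    obtain ex where ex: "ex \<in> S" "x \<ominus>\<^bsub>M\<^esub> ex \<in> X" using proj_class_rep[OF XS x X S] .
    obtain ey where ey: "ey \<in> S" "y \<ominus>\<^bsub>M\<^esub> ey \<in> X" using proj_class_rep[OF XS y X S] .
    have exc: "ex \<in> carrier M" and eyc: "ey \<in> carrier M" using ex ey Sc by auto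
    have "(x \<oplus>\<^bsub>M\<^esub> y) \<ominus>\<^bsub>M\<^esub> (ex \<oplus>\<^bsub>M\<^esub> ey) \<in> X"
      using add_diff_add[OF x y exc eyc] submoduleD(3)[OF X ex(2) ey(2)] by simp
    then have "proj_class M X S (x \<oplus>\<^bsub>M\<^esub> y) = mcoset M (X \<inter> S) (ex \<oplus>\<^bsub>M\<^esub> ey)"
      using proj_class_eq[OF X S G.a_closed[OF x y] submoduleD(3)[OF S ex(1) ey(1)]] by simp
    also have "\<dots> = proj_class M X S x \<oplus>\<^bsub>quot M (X \<inter> S)\<^esub> proj_class M X S y"
      using quot_add[OF C exc eyc] proj_class_eq[OF X S x ex] proj_class_eq[OF X S y ey] by simp
    finally show "proj_class M X S (x \<oplus>\<^bsub>submod M D\<^esub> y)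
        = proj_class M X S x \<oplus>\<^bsub>quot (submod M S) (X \<inter> S)\<^esub> proj_class M X S y" by simp
  next
    fix x r assume "x \<in> carrier (submod M D)" and r: "r \<in> carrier R"
    then have x: "x \<in> carrier M" using D by auto
    obtain e where e: "e \<in> S" "x \<ominus>\<^bsub>M\<^esub> e \<in> X" using proj_class_rep[OF XS x X S] .
    have ec: "e \<in> carrier M" using e Sc by auto
    have "rsmult M x r \<ominus>\<^bsub>M\<^esub> rsmult M e r \<in> X"
      using smult_diff[OF x ec r] submoduleD(5)[OF X e(2) r] by simp
    then have "proj_class M X S (rsmult M x r) = mcoset M (X \<inter> S) (rsmult M e r)"
      using proj_class_eq[OF X S smult_closed[OF x r] submoduleD(5)[OF S e(1) r]] by simp
    also have "\<dots> = rsmult (quot M (X \<inter> S)) (proj_class M X S x) r"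
      using quot_smult[OF C ec r] proj_class_eq[OF X S x e] by simp
    finally show "proj_class M X S (rsmult (submod M D) x r)
        = rsmult (quot (submod M S) (X \<inter> S)) (proj_class M X S x) r" by simp
  qed
qed

text \<open>If M = X + S and D is S-projective, some homomorphism h : D \<rightarrow> S satisfies
  d - h d \<in> X for all d \<in> D: it is a lift of proj_class along S \<rightarrow> S/(X \<inter> S).\<close>
lemma lift_along_supplement:
  assumes X: "rsubmodule R M X" and D: "rsubmodule R M D" and S: "rsubmodule R M S"
    and XS: "msum M X S = carrier M"
    and proj: "rel_projective R (submod M D) (submod M S)"
  obtains h where "rhom R (submod M D) (submod M S) h" "\<forall>d\<in>D. d \<ominus>\<^bsub>M\<^esub> h d \<in> X"
proof -
  have C: "rsubmodule R M (X \<inter> S)" using submodule_inter[OF X S] .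
  have "rsubmodule R (submod M S) (X \<inter> S)"
    using submodule_of_submod[OF S C] by simp
  then obtain h where h: "rhom R (submod M D) (submod M S) h"
    and lift: "\<forall>d\<in>D. mcoset M (X \<inter> S) (h d) = proj_class M X S d"
    using proj proj_class_rhom[OF X S XS submoduleD(1)[OF D]]
    unfolding rel_projective_def by fastforce
  have "d \<ominus>\<^bsub>M\<^esub> h d \<in> X" if d: "d \<in> D" for d
  proof -
    have "h d \<in> carrier M" using rhom_submodD(1)[OF h d] submoduleD(1)[OF S] by auto
    then have "h d \<in> proj_class M X S d" using coset_self[OF C] lift d by metis
    then show ?thesis unfolding proj_class_def by simp
  qed
  then show thesis using that h by blast
qed

subsection \<open>Graphs of homomorphisms are complements\<close>

lemma rhom_submod_zero:
  assumes D: "rsubmodule R M D" and S: "rsubmodule R M S"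
    and h: "rhom R (submod M D) (submod M S) h"
  shows "h \<zero>\<^bsub>M\<^esub> = \<zero>\<^bsub>M\<^esub>"
proof -
  have "h \<zero>\<^bsub>M\<^esub> \<oplus>\<^bsub>M\<^esub> h \<zero>\<^bsub>M\<^esub> = h \<zero>\<^bsub>M\<^esub>"
    using rhom_submodD(2)[OF h, of "\<zero>\<^bsub>M\<^esub>" "\<zero>\<^bsub>M\<^esub>"] submoduleD(2)[OF D] by simp
  then show ?thesis
    using add_right_idempotent rhom_submodD(1)[OF h] submoduleD(1,2) D S by blast
qed

lemma rhom_submod_neg:
  assumes D: "rsubmodule R M D" and S: "rsubmodule R M S"
    and h: "rhom R (submod M D) (submod M S) h" and x: "x \<in> D"
  shows "h (\<ominus>\<^bsub>M\<^esub> x) = \<ominus>\<^bsub>M\<^esub> h x"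
proof -
  have nx: "\<ominus>\<^bsub>M\<^esub> x \<in> D" using submoduleD(4)[OF D x] .
  have hc: "h x \<in> carrier M" "h (\<ominus>\<^bsub>M\<^esub> x) \<in> carrier M"
    using rhom_submodD(1)[OF h] x nx submoduleD(1)[OF S] by auto
  have "h x \<oplus>\<^bsub>M\<^esub> h (\<ominus>\<^bsub>M\<^esub> x) = \<zero>\<^bsub>M\<^esub>"
    using rhom_submodD(2)[OF h x nx] rhom_submod_zero[OF D S h] x submoduleD(1)[OF D]
    by (auto simp: G.r_neg)
  then show ?thesis using hc by (metis G.a_comm G.minus_equality)
qed

lemma hom_graph_submodule:
  assumes D: "rsubmodule R M D" and S: "rsubmodule R M S"
    and h: "rhom R (submod M D) (submod M S) h"
  shows "rsubmodule R M (hom_graph M h D)"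
proof -
  have c: "x \<in> carrier M" "h x \<in> carrier M" if "x \<in> D" for x
    using that rhom_submodD(1)[OF h] submoduleD(1) D S by auto
  have "\<zero>\<^bsub>M\<^esub> = \<zero>\<^bsub>M\<^esub> \<ominus>\<^bsub>M\<^esub> h \<zero>\<^bsub>M\<^esub>"
    using rhom_submod_zero[OF D S h] diff_self by simp
  then have "\<zero>\<^bsub>M\<^esub> \<in> hom_graph M h D"
    unfolding hom_graph_def using submoduleD(2)[OF D] by blast
  moreover have "(x \<ominus>\<^bsub>M\<^esub> h x) \<oplus>\<^bsub>M\<^esub> (y \<ominus>\<^bsub>M\<^esub> h y) \<in> hom_graph M h D"
    if "x \<in> D" "y \<in> D" for x y
  proof -
    have "(x \<ominus>\<^bsub>M\<^esub> h x) \<oplus>\<^bsub>M\<^esub> (y \<ominus>\<^bsub>M\<^esub> h y) = (x \<oplus>\<^bsub>M\<^esub> y) \<ominus>\<^bsub>M\<^esub> h (x \<oplus>\<^bsub>M\<^esub> y)"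
      using add_diff_add c that rhom_submodD(2)[OF h that] by simp
    then show ?thesis unfolding hom_graph_def using submoduleD(3)[OF D that] by blast
  qed
  moreover have "\<ominus>\<^bsub>M\<^esub> (x \<ominus>\<^bsub>M\<^esub> h x) \<in> hom_graph M h D" if "x \<in> D" for x
  proof -
    have "\<ominus>\<^bsub>M\<^esub> (x \<ominus>\<^bsub>M\<^esub> h x) = (\<ominus>\<^bsub>M\<^esub> x) \<ominus>\<^bsub>M\<^esub> h (\<ominus>\<^bsub>M\<^esub> x)"
      using neg_diff c that rhom_submod_neg[OF D S h that] by simp
    then show ?thesis unfolding hom_graph_def using submoduleD(4)[OF D that] by blast
  qed
  moreover have "rsmult M (x \<ominus>\<^bsub>M\<^esub> h x) r \<in> hom_graph M h D"
    if "x \<in> D" "r \<in> carrier R" for x r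
  proof -
    have "rsmult M (x \<ominus>\<^bsub>M\<^esub> h x) r = rsmult M x r \<ominus>\<^bsub>M\<^esub> h (rsmult M x r)"
      using smult_diff c that rhom_submodD(3)[OF h that] by simp
    then show ?thesis unfolding hom_graph_def using submoduleD(5)[OF D that] by blast
  qed
  moreover have "hom_graph M h D \<subseteq> carrier M" unfolding hom_graph_def using c by auto
  ultimately show ?thesis unfolding rsubmodule_def hom_graph_def by blast
qed

lemma hom_graph_complement:
  assumes ds: "int_dsum R M D S" and h: "rhom R (submod M D) (submod M S) h"
  shows "int_dsum R M (hom_graph M h D) S"
proof -
  have D: "rsubmodule R M D" and S: "rsubmodule R M S"
    and DS: "msum M D S = carrier M" and DS0: "D \<inter> S = {\<zero>\<^bsub>M\<^esub>}"
    using ds unfolding int_dsum_def by auto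
  have Dc: "D \<subseteq> carrier M" and Sc: "S \<subseteq> carrier M" using submoduleD(1) D S by auto
  have A: "rsubmodule R M (hom_graph M h D)" using hom_graph_submodule[OF D S h] .
  have "carrier M \<subseteq> msum M (hom_graph M h D) S"
  proof
    fix m assume "m \<in> carrier M"
    then have "m \<in> msum M D S" using DS by simp
    then obtain d e where de: "d \<in> D" "e \<in> S" "m = d \<oplus>\<^bsub>M\<^esub> e"
      unfolding msum_def by auto
    have hd: "h d \<in> S" using rhom_submodD(1)[OF h de(1)] .
    then have "d \<in> carrier M" "h d \<in> carrier M" "e \<in> carrier M" using de Dc Sc by auto
    then have "m = (d \<ominus>\<^bsub>M\<^esub> h d) \<oplus>\<^bsub>M\<^esub> (h d \<oplus>\<^bsub>M\<^esub> e)"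
      using diff_add_telescope de(3) by simp
    moreover have "d \<ominus>\<^bsub>M\<^esub> h d \<in> hom_graph M h D" unfolding hom_graph_def using de by auto
    moreover have "h d \<oplus>\<^bsub>M\<^esub> e \<in> S" using hd de submoduleD(3)[OF S] by auto
    ultimately show "m \<in> msum M (hom_graph M h D) S" unfolding msum_def by blast
  qed
  moreover have "msum M (hom_graph M h D) S \<subseteq> carrier M"
    unfolding msum_def using submoduleD(1)[OF A] Sc by auto
  moreover have "hom_graph M h D \<inter> S \<subseteq> {\<zero>\<^bsub>M\<^esub>}"
  proof
    fix a assume a: "a \<in> hom_graph M h D \<inter> S"
    then obtain d where d: "d \<in> D" "a = d \<ominus>\<^bsub>M\<^esub> h d" unfolding hom_graph_def by auto
    have hd: "h d \<in> S" using rhom_submodD(1)[OF h d(1)] .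
    have "d \<in> carrier M" "h d \<in> carrier M" using d hd Dc Sc by auto
    then have "d = a \<oplus>\<^bsub>M\<^esub> h d" using diff_add_cancel d(2) by simp
    then have "d \<in> S" using a hd submoduleD(3)[OF S, of a "h d"] by simp
    then have "d = \<zero>\<^bsub>M\<^esub>" using DS0 d by auto
    then show "a \<in> {\<zero>\<^bsub>M\<^esub>}" using d rhom_submod_zero[OF D S h] diff_self by simp
  qed
  ultimately show ?thesis
    unfolding int_dsum_def using A S submoduleD(2)[OF A] submoduleD(2)[OF S] by blast
qed

end

theorem proposition3p9:
  fixes R :: "'r ring" and M :: "('r, 'm) rmod"
  assumes "rmodule R M"
    and "\<forall>X. is_cyclic_submodule R M X \<longrightarrow>
           (\<exists>D D'. int_dsum R M D D' \<and> supplement R M X D' \<and>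
                   rel_projective R (submod M D) (submod M D'))"
  shows "principally_goldie_star_lifting R M"
proof -
  interpret right_module R M by (rule right_module.intro) (rule assms(1))
  show ?thesis
    unfolding principally_goldie_star_lifting_def
  proof (intro allI impI)
    fix X assume cyclic: "is_cyclic_submodule R M X"
    then have X: "rsubmodule R M X"
      using cyclic_submodule unfolding is_cyclic_submodule_def by auto
    obtain D S where ds: "int_dsum R M D S" and sup: "supplement R M X S"
      and proj: "rel_projective R (submod M D) (submod M S)"
      using assms(2) cyclic by blast
    have D: "rsubmodule R M D" and S: "rsubmodule R M S"
      using ds unfolding int_dsum_def by auto
    have XS: "msum M X S = carrier M" and small: "small_in R (submod M S) (X \<inter> S)"
      using sup unfolding supplement_def by auto
    obtain h where h: "rhom R (submod M D) (submod M S) h" and hX: "\<forall>d\<in>D. d \<ominus>\<^bsub>M\<^esub> h d \<in> X"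
      using lift_along_supplement[OF X D S XS proj] .
    define A where "A = hom_graph M h D"
    have A_ds: "int_dsum R M A S" using hom_graph_complement[OF ds h] unfolding A_def .
    have AX: "A \<subseteq> X" using hX unfolding A_def hom_graph_def by auto
    have "beta_star R M X A"
      using beta_star_of_complement[OF X _ AX S _ small] A_ds unfolding int_dsum_def by auto
    then show "\<exists>D. direct_summand R M D \<and> beta_star R M X D"
      using A_ds unfolding direct_summand_def by blast
  qed
qed

end
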